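(* For infinitely many $n\in\mathbb{N}$ there exist matroids $M=(E,\mathcal{I})$ and $M'=(E,\mathcal{I}')$ over the same ground set $E$ with $|E|=n$, and a weight function $w:E\to\{0,1\}$, together with a vertex $x^*$ of the polytope $\{x: x\in P_B(M)\cap P_B(M'),\ w^{\mathsf T}x=1\}$, such that there is a unique common basis $B$ of $M$ and $M'$ with $w(B)=1$, and this $B$ satisfies $\|x^*-\chi(B)\|_1=\tfrac34 n$.
   Context: $P_B(M)$ denotes the base polytope of $M$ (convex hull of characteristic vectors of bases of $M$) in $\mathbb{R}^E$; $\chi(B)$ is the characteristic vector of $B$; $w(S)=\sum_{e\in S}w(e)$; a common basis is a set that is a basis of both matroids. *)

theory Defs
  imports Main "HOL-Library.Indicator_Function"
begin

definition matroid :: "'a set \<Rightarrow> 'a set set \<Rightarrow> bool" where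
  "matroid E \<I> \<longleftrightarrow> finite E \<and> (\<forall>X\<in>\<I>. X \<subseteq> E) \<and> {} \<in> \<I>
     \<and> (\<forall>X Y. X \<in> \<I> \<and> Y \<subseteq> X \<longrightarrow> Y \<in> \<I>)
     \<and> (\<forall>X Y. X \<in> \<I> \<and> Y \<in> \<I> \<and> card X < card Y \<longrightarrow> (\<exists>e\<in>Y - X. insert e X \<in> \<I>))"

definition basis :: "'a set set \<Rightarrow> 'a set \<Rightarrow> bool" where
  "basis \<I> B \<longleftrightarrow> B \<in> \<I> \<and> (\<forall>X\<in>\<I>. B \<subseteq> X \<longrightarrow> X = B)"

text \<open>Characteristic vector of a set, as a point of R^E (coordinates outside E are 0).\<close>
definition chi :: "'a set \<Rightarrow> 'a \<Rightarrow> real" where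
  "chi B = indicator B"

definition conv_hull :: "('a \<Rightarrow> real) set \<Rightarrow> ('a \<Rightarrow> real) set" where
  "conv_hull A = {x. \<exists>S u. finite S \<and> S \<subseteq> A \<and> (\<forall>y\<in>S. u y \<ge> 0) \<and> sum u S = 1
                        \<and> x = (\<lambda>e. \<Sum>y\<in>S. u y * y e)}"

definition base_polytope :: "'a set set \<Rightarrow> ('a \<Rightarrow> real) set" where
  "base_polytope \<I> = conv_hull {chi B | B. basis \<I> B}"

definition vertex_of :: "('a \<Rightarrow> real) \<Rightarrow> ('a \<Rightarrow> real) set \<Rightarrow> bool" where
  "vertex_of x Q \<longleftrightarrow> x \<in> Q \<and>
     \<not> (\<exists>a\<in>Q. \<exists>b\<in>Q. a \<noteq> b \<and> (\<exists>t::real. 0 < t \<and> t < 1 \<and> x = (\<lambda>e. (1 - t) * a e + t * b e)))"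

end

(*
  Both matroids are partition matroids whose blocks are pairs, and together the two pairings
  form two even cycles, of lengths 2k and 2l.  On a point x of both base polytopes the two
  coordinates of every pair sum to 1, so x alternates along each cycle and is determined by its
  value at one element of each cycle.  In particular the common bases are the four alternating
  sets, and the weight w (1 at the element 1 of the first cycle and at the l odd elements of the
  second) gives them the weights 0, 1, l and l + 1; for l >= 2 exactly one of them has weight 1.
  The point x* = (1 - 1/l) chi(A) + (1/l) chi(A'), for the two alternating sets A, A' that take the
  even elements of the first cycle, has weight 1 and vanishes at the element 1; every point of the
  face that vanishes there equals x*, so x* is a vertex.  It differs from the weight-one basis by 1
  on the first cycle and by 1/l on the second, at l1-distance 2k + 2, which is 3/4 of n = 2k + 2l
  when k = 3m + 2 and l = m + 2.
*)
theory Submission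
  imports Defs "HOL-Library.Infinite_Set"
begin

definition partition_matroid :: "'a set \<Rightarrow> ('a \<Rightarrow> 'b) \<Rightarrow> 'a set set" where
  "partition_matroid E p = {X. X \<subseteq> E \<and> inj_on p X}"

lemma matroid_partition_matroid:
  assumes "finite E"
  shows "matroid E (partition_matroid E p)"
  unfolding matroid_def
proof (intro conjI allI impI ballI)
  fix X Y
  assume "X \<in> partition_matroid E p \<and> Y \<in> partition_matroid E p \<and> card X < card Y"
  then have X: "X \<subseteq> E" "inj_on p X" and Y: "Y \<subseteq> E" "inj_on p Y" and "card X < card Y"
    by (auto simp: partition_matroid_def)
  then have "card (p ` X) < card (p ` Y)"
    by (simp add: card_image)
  then have "\<not> p ` Y \<subseteq> p ` X"
    using X assms by (meson card_mono finite_imageI finite_subset leD)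
  then obtain y where "y \<in> Y" "p y \<notin> p ` X"
    by auto
  then show "\<exists>e\<in>Y - X. insert e X \<in> partition_matroid E p"
    using X Y by (intro bexI[of _ y]) (auto simp: partition_matroid_def)
qed (use assms in \<open>auto simp: partition_matroid_def intro: inj_on_subset\<close>)

lemma basis_partition_matroid_iff:
  "basis (partition_matroid E p) X \<longleftrightarrow> X \<subseteq> E \<and> inj_on p X \<and> p ` X = p ` E"
proof
  assume B: "basis (partition_matroid E p) X"
  then have X: "X \<subseteq> E" "inj_on p X"
    by (auto simp: basis_def partition_matroid_def)
  have "p e \<in> p ` X" if "e \<in> E" for e
  proof (rule ccontr)
    assume "p e \<notin> p ` X"
    then have "insert e X \<in> partition_matroid E p" "e \<notin> X"
      using X that by (auto simp: partition_matroid_def)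
    then show False
      using B by (auto simp: basis_def)
  qed
  with X show "X \<subseteq> E \<and> inj_on p X \<and> p ` X = p ` E"
    by auto
next
  assume X: "X \<subseteq> E \<and> inj_on p X \<and> p ` X = p ` E"
  have "Y \<subseteq> X" if Y: "Y \<in> partition_matroid E p" "X \<subseteq> Y" for Y
  proof
    fix y
    assume "y \<in> Y"
    moreover obtain x where "x \<in> X" "p x = p y"
      using X Y \<open>y \<in> Y\<close> by (force simp: partition_matroid_def)
    ultimately show "y \<in> X"
      using Y by (auto simp: partition_matroid_def inj_on_def)
  qed
  with X show "basis (partition_matroid E p) X"
    by (auto simp: basis_def partition_matroid_def)
qed

definition perfect_pairing :: "'a set \<Rightarrow> ('a \<Rightarrow> 'a) \<Rightarrow> bool" where
  "perfect_pairing E q \<longleftrightarrow> (\<forall>e\<in>E. q e \<in> E \<and> q e \<noteq> e \<and> q (q e) = e)"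

definition pair_matroid :: "'a set \<Rightarrow> ('a \<Rightarrow> 'a) \<Rightarrow> 'a set set" where
  "pair_matroid E q = partition_matroid E (\<lambda>e. {e, q e})"

lemma basis_pair_matroid_iff:
  assumes "perfect_pairing E q"
  shows "basis (pair_matroid E q) X \<longleftrightarrow> X \<subseteq> E \<and> (\<forall>e\<in>E. e \<in> X \<longleftrightarrow> q e \<notin> X)"
proof -
  have block: "{y, q y} = {e, q e} \<longleftrightarrow> y = e \<or> y = q e" if "e \<in> E" "y \<in> E" for e y
    using assms that unfolding perfect_pairing_def by (metis doubleton_eq_iff)
  show ?thesis
    unfolding pair_matroid_def basis_partition_matroid_iff
  proof
    assume X: "X \<subseteq> E \<and> inj_on (\<lambda>e. {e, q e}) X \<and> (\<lambda>e. {e, q e}) ` X = (\<lambda>e. {e, q e}) ` E"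
    have "e \<in> X \<longleftrightarrow> q e \<notin> X" if "e \<in> E" for e
    proof -
      obtain x where "x \<in> X" "{x, q x} = {e, q e}"
        using X \<open>e \<in> E\<close> by (metis (no_types, lifting) image_iff)
      moreover have "q e \<noteq> e" "{e, q e} = {q e, q (q e)}"
        using assms \<open>e \<in> E\<close> by (auto simp: perfect_pairing_def)
      ultimately show ?thesis
        using X by (auto simp: inj_on_def doubleton_eq_iff)
    qed
    with X show "X \<subseteq> E \<and> (\<forall>e\<in>E. e \<in> X \<longleftrightarrow> q e \<notin> X)"
      by blast
  next
    assume X: "X \<subseteq> E \<and> (\<forall>e\<in>E. e \<in> X \<longleftrightarrow> q e \<notin> X)"
    have "inj_on (\<lambda>e. {e, q e}) X"
      using X block by (auto simp: inj_on_def subset_iff)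
    moreover have "(\<lambda>e. {e, q e}) ` E \<subseteq> (\<lambda>e. {e, q e}) ` X"
    proof
      fix B
      assume "B \<in> (\<lambda>e. {e, q e}) ` E"
      then obtain e where "e \<in> E" "B = {e, q e}"
        by auto
      moreover have "{e, q e} = {q e, q (q e)}"
        using assms \<open>e \<in> E\<close> by (auto simp: perfect_pairing_def)
      ultimately show "B \<in> (\<lambda>e. {e, q e}) ` X"
        using X by (cases "e \<in> X") auto
    qed
    ultimately show "X \<subseteq> E \<and> inj_on (\<lambda>e. {e, q e}) X \<and> (\<lambda>e. {e, q e}) ` X = (\<lambda>e. {e, q e}) ` E"
      using X by blast
  qed
qed

lemma conv_hull_segment:
  assumes "y \<in> A" "z \<in> A" "0 \<le> c" "c \<le> 1"
  shows "(\<lambda>e. (1 - c) * y e + c * z e) \<in> conv_hull A"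
proof (cases "y = z")
  case True
  then show ?thesis
    using assms unfolding conv_hull_def
    by (intro CollectI exI[of _ "{y}"] exI[of _ "\<lambda>_. 1"]) (auto simp: algebra_simps)
next
  case False
  then show ?thesis
    using assms unfolding conv_hull_def
    by (intro CollectI exI[of _ "{y, z}"] exI[of _ "\<lambda>v. if v = y then 1 - c else c"]) auto
qed

lemma conv_hull_sum_eq:
  assumes "x \<in> conv_hull A" "\<And>y. y \<in> A \<Longrightarrow> sum y F = c"
  shows "sum x F = c"
proof -
  obtain S u where S: "S \<subseteq> A" "sum u S = 1" and x: "x = (\<lambda>e. \<Sum>y\<in>S. u y * y e)"
    using assms(1) unfolding conv_hull_def by blast
  have "sum x F = (\<Sum>y\<in>S. u y * sum y F)"
    unfolding x by (simp add: sum_distrib_left sum.swap[of _ F])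
  also have "\<dots> = (\<Sum>y\<in>S. u y * c)"
    using S(1) assms(2) by (intro sum.cong) auto
  finally show ?thesis
    using S(2) by (simp add: sum_distrib_right[symmetric])
qed

lemma conv_hull_nonneg:
  assumes "x \<in> conv_hull A" "\<And>y. y \<in> A \<Longrightarrow> 0 \<le> y e"
  shows "0 \<le> x e"
proof -
  obtain S u where "S \<subseteq> A" "\<forall>y\<in>S. 0 \<le> u y" and "x = (\<lambda>e. \<Sum>y\<in>S. u y * y e)"
    using assms(1) unfolding conv_hull_def by blast
  then show ?thesis
    using assms(2) by (auto intro!: sum_nonneg)
qed

lemma chi_in_base_polytope:
  assumes "basis \<I> B"
  shows "chi B \<in> base_polytope \<I>"
  unfolding base_polytope_def conv_hull_def
  using assms by (intro CollectI exI[of _ "{chi B}"] exI[of _ "\<lambda>_. 1"]) auto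

lemma base_polytope_nonneg:
  "x \<in> base_polytope \<I> \<Longrightarrow> 0 \<le> x e"
  unfolding base_polytope_def by (erule conv_hull_nonneg) (auto simp: chi_def)

lemma base_polytope_outside:
  assumes "matroid E \<I>" "x \<in> base_polytope \<I>" "e \<notin> E"
  shows "x e = 0"
proof -
  have "\<forall>X\<in>\<I>. X \<subseteq> E"
    using assms(1) by (simp add: matroid_def)
  then have outside: "e \<notin> B" if "basis \<I> B" for B
    using assms(3) that by (auto simp: basis_def)
  have "sum x {e} = 0"
    using assms(2) unfolding base_polytope_def
    by (rule conv_hull_sum_eq) (use outside in \<open>auto simp: chi_def\<close>)
  then show ?thesis
    by simp
qed

lemma base_polytope_pair_matroid:
  assumes "perfect_pairing E q" "x \<in> base_polytope (pair_matroid E q)" "e \<in> E"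
  shows "x e + x (q e) = 1"
proof -
  have "q e \<noteq> e"
    using assms by (simp add: perfect_pairing_def)
  moreover have "sum x {e, q e} = 1"
    using assms(2) unfolding base_polytope_def
  proof (rule conv_hull_sum_eq)
    fix y
    assume "y \<in> {chi B |B. basis (pair_matroid E q) B}"
    with assms(1,3) \<open>q e \<noteq> e\<close> show "sum y {e, q e} = 1"
      by (auto simp: basis_pair_matroid_iff chi_def)
  qed
  ultimately show ?thesis
    by simp
qed

lemma vertex_of_if_determined_by_zeros:
  assumes "x \<in> Q" "\<And>y e. y \<in> Q \<Longrightarrow> 0 \<le> y e"
    and "\<And>y. y \<in> Q \<Longrightarrow> (\<And>e. x e = 0 \<Longrightarrow> y e = 0) \<Longrightarrow> y = x"
  shows "vertex_of x Q"
  unfolding vertex_of_def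
proof (intro conjI notI)
  assume "\<exists>a\<in>Q. \<exists>b\<in>Q. a \<noteq> b \<and> (\<exists>t. 0 < t \<and> t < 1 \<and> x = (\<lambda>e. (1 - t) * a e + t * b e))"
  then obtain a b t where ab: "a \<in> Q" "b \<in> Q" "a \<noteq> b" "0 < t" "t < 1"
    and x: "x = (\<lambda>e. (1 - t) * a e + t * b e)"
    by blast
  have "a e = 0 \<and> b e = 0" if "x e = 0" for e
  proof -
    have "0 \<le> (1 - t) * a e" "0 \<le> t * b e"
      using ab assms(2) by simp_all
    then show ?thesis
      using that ab(4,5) unfolding x by (simp add: add_nonneg_eq_0_iff)
  qed
  then have "a = x" "b = x"
    using ab assms(3) by blast+
  with ab(3) show False
    by simp
qed (fact assms(1))

lemma alternating_if_consecutive_sums_one: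
  fixes f :: "nat \<Rightarrow> real"
  assumes "\<And>i. i + 1 < N \<Longrightarrow> f (a + i) + f (a + i + 1) = 1" "d < N"
  shows "f (a + d) = (if even d then f a else 1 - f a)"
  using assms(2)
proof (induction d)
  case (Suc d)
  then show ?case
    using assms(1)[of d] by auto
qed simp

lemma sum_lessThan_add:
  fixes f :: "nat \<Rightarrow> 'a::comm_monoid_add"
  shows "(\<Sum>e<a + b. f e) = (\<Sum>e<a. f e) + (\<Sum>d<b. f (a + d))"
  by (induction b) (simp_all add: add.assoc)

lemma sum_alternating:
  fixes u v :: "'a::comm_semiring_1"
  shows "(\<Sum>d<2 * n. if even d then u else v) = of_nat n * (u + v)"
  by (induction n) (simp_all add: algebra_simps)

locale two_cycles =
  fixes k l :: nat
  assumes k_pos: "0 < k" and l_ge_2: "2 \<le> l"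
begin

definition ground :: "nat set" where
  "ground = {..<2 * k + 2 * l}"

definition partner1 :: "nat \<Rightarrow> nat" where
  "partner1 e = (if even e then e + 1 else e - 1)"

text \<open>The two cycles are \<open>{..<2 * k}\<close> and \<open>{2 * k..<2 * k + 2 * l}\<close>: \<open>partner1\<close> pairs
  \<open>2 * j\<close> with \<open>2 * j + 1\<close>, and \<open>partner2\<close> pairs \<open>2 * j - 1\<close> with \<open>2 * j\<close> and closes each cycle
  by pairing its first and last element.\<close>

definition partner2 :: "nat \<Rightarrow> nat" where
  "partner2 e =
    (if e = 0 then 2 * k - 1 else if e = 2 * k - 1 then 0
     else if e = 2 * k then 2 * k + 2 * l - 1 else if e = 2 * k + 2 * l - 1 then 2 * k
     else if odd e then e + 1 else e - 1)"

definition M1 :: "nat set set" where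
  "M1 = pair_matroid ground partner1"

definition M2 :: "nat set set" where
  "M2 = pair_matroid ground partner2"

definition alternating_set :: "bool \<Rightarrow> bool \<Rightarrow> nat set" where
  "alternating_set s t = {e \<in> ground. if e < 2 * k then even e = s else even e = t}"

definition weight :: "nat \<Rightarrow> real" where
  "weight e = (if e = 1 \<or> (2 * k \<le> e \<and> odd e) then 1 else 0)"

definition xstar :: "nat \<Rightarrow> real" where
  "xstar e = (1 - 1 / l) * chi (alternating_set True True) e
     + 1 / l * chi (alternating_set True False) e"

lemma partner1_cycle_structure:
  assumes "e \<in> ground"
  shows "partner1 e \<in> ground \<and> partner1 e \<noteq> e \<and> partner1 (partner1 e) = e
    \<and> (partner1 e < 2 * k \<longleftrightarrow> e < 2 * k) \<and> (even (partner1 e) \<longleftrightarrow> odd e)"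
proof (cases "even e")
  case True
  then have "e + 1 < 2 * k + 2 * l" "e + 1 < 2 * k \<longleftrightarrow> e < 2 * k"
    using assms unfolding ground_def by simp_all presburger+
  with True show ?thesis
    by (simp add: ground_def partner1_def)
next
  case False
  then have "e - 1 < 2 * k \<longleftrightarrow> e < 2 * k" "0 < e"
    by presburger+
  with False assms show ?thesis
    by (auto simp: ground_def partner1_def)
qed

lemma partner2_cycle_structure:
  assumes "e \<in> ground"
  shows "partner2 e \<in> ground \<and> partner2 e \<noteq> e \<and> partner2 (partner2 e) = e
    \<and> (partner2 e < 2 * k \<longleftrightarrow> e < 2 * k) \<and> (even (partner2 e) \<longleftrightarrow> odd e)"
proof -
  have e: "e < 2 * k + 2 * l" and odd: "odd (2 * k - 1)" "odd (2 * k + 2 * l - 1)"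
    using assms k_pos l_ge_2 by (simp_all add: ground_def)
  consider "e = 0" | "e = 2 * k - 1" | "e = 2 * k" | "e = 2 * k + 2 * l - 1"
    | (odd_regular) "odd e" "e \<noteq> 2 * k - 1" "e \<noteq> 2 * k + 2 * l - 1"
    | (even_regular) "even e" "e \<noteq> 0" "e \<noteq> 2 * k"
    by blast
  then show ?thesis
  proof cases
    case odd_regular
    then have "e + 1 \<noteq> 2 * k" "e + 1 \<noteq> 2 * k + 2 * l" "e + 1 \<noteq> 2 * k - 1"
      "e + 1 \<noteq> 2 * k + 2 * l - 1" "0 < e"
      using e by presburger+
    with odd_regular odd e show ?thesis
      by (auto simp: ground_def partner2_def)
  next
    case even_regular
    then have "e - 1 \<noteq> 2 * k - 1" "e - 1 \<noteq> 2 * k + 2 * l - 1" "e - 1 \<noteq> 0"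
      using e odd by presburger+
    with even_regular odd e show ?thesis
      by (auto simp: ground_def partner2_def)
  qed (use k_pos l_ge_2 odd in \<open>auto simp: ground_def partner2_def\<close>)
qed

lemma perfect_pairing_partner1: "perfect_pairing ground partner1"
  using partner1_cycle_structure by (simp add: perfect_pairing_def)

lemma perfect_pairing_partner2: "perfect_pairing ground partner2"
  using partner2_cycle_structure by (simp add: perfect_pairing_def)

lemma basis_alternating_set:
  assumes "\<And>e. e \<in> ground \<Longrightarrow> q e \<in> ground \<and> q e \<noteq> e \<and> q (q e) = e
      \<and> (q e < 2 * k \<longleftrightarrow> e < 2 * k) \<and> (even (q e) \<longleftrightarrow> odd e)"
  shows "basis (pair_matroid ground q) (alternating_set s t)"
proof -
  have "perfect_pairing ground q"
    using assms by (simp add: perfect_pairing_def)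
  then show ?thesis
    using assms by (auto simp: basis_pair_matroid_iff alternating_set_def)
qed

lemma basis_M1_alternating_set: "basis M1 (alternating_set s t)"
  unfolding M1_def using partner1_cycle_structure by (rule basis_alternating_set)

lemma basis_M2_alternating_set: "basis M2 (alternating_set s t)"
  unfolding M2_def using partner2_cycle_structure by (rule basis_alternating_set)

lemma matroid_M1: "matroid ground M1"
  unfolding M1_def pair_matroid_def by (rule matroid_partition_matroid) (simp add: ground_def)

lemma matroid_M2: "matroid ground M2"
  unfolding M2_def pair_matroid_def by (rule matroid_partition_matroid) (simp add: ground_def)

lemma consecutive_partners:
  assumes "e + 1 < 2 * k \<or> 2 * k \<le> e \<and> e + 1 < 2 * k + 2 * l"
  shows "partner1 e = e + 1 \<or> partner2 e = e + 1"
  using assms unfolding partner1_def partner2_def by (cases "even e") (auto simp: odd_pos)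

lemma common_point_consecutive:
  fixes x :: "nat \<Rightarrow> real"
  assumes "x \<in> base_polytope M1" "x \<in> base_polytope M2"
    and "e + 1 < 2 * k \<or> 2 * k \<le> e \<and> e + 1 < 2 * k + 2 * l"
  shows "x e + x (e + 1) = 1"
proof -
  have "e \<in> ground"
    using assms(3) by (auto simp: ground_def)
  with consecutive_partners[OF assms(3)] show ?thesis
    using base_polytope_pair_matroid[OF perfect_pairing_partner1 assms(1)[unfolded M1_def]]
      base_polytope_pair_matroid[OF perfect_pairing_partner2 assms(2)[unfolded M2_def]]
    by metis
qed

lemma common_point_inner:
  fixes x :: "nat \<Rightarrow> real"
  assumes "x \<in> base_polytope M1" "x \<in> base_polytope M2" "d < 2 * k"
  shows "x d = (if even d then x 0 else 1 - x 0)"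
  using alternating_if_consecutive_sums_one[where a = 0 and N = "2 * k"]
    common_point_consecutive[OF assms(1,2)] assms(3)
  by simp

lemma common_point_outer:
  fixes x :: "nat \<Rightarrow> real"
  assumes "x \<in> base_polytope M1" "x \<in> base_polytope M2" "d < 2 * l"
  shows "x (2 * k + d) = (if even d then x (2 * k) else 1 - x (2 * k))"
  using alternating_if_consecutive_sums_one[where a = "2 * k" and N = "2 * l"]
    common_point_consecutive[OF assms(1,2)] assms(3)
  by simp

lemma common_point_eqI:
  fixes x y :: "nat \<Rightarrow> real"
  assumes "x \<in> base_polytope M1" "x \<in> base_polytope M2"
    and "y \<in> base_polytope M1" "y \<in> base_polytope M2"
    and "x 0 = y 0" "x (2 * k) = y (2 * k)"
  shows "x = y"
proof
  fix e
  consider "e < 2 * k" | d where "e = 2 * k + d" "d < 2 * l" | "e \<notin> ground"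
    by (metis ground_def add_less_cancel_left le_add_diff_inverse lessThan_iff not_less)
  then show "x e = y e"
  proof cases
    case 1
    then show ?thesis
      using assms common_point_inner[of x e] common_point_inner[of y e] by simp
  next
    case 2
    then show ?thesis
      using assms common_point_outer[of x d] common_point_outer[of y d] by simp
  next
    case 3
    then show ?thesis
      using assms matroid_M1 base_polytope_outside by metis
  qed
qed

lemma sum_ground: "sum f ground = (\<Sum>d<2 * k. f d) + (\<Sum>d<2 * l. f (2 * k + d))"
  unfolding ground_def by (rule sum_lessThan_add)

lemma weight_common_point:
  fixes x :: "nat \<Rightarrow> real"
  assumes "x \<in> base_polytope M1" "x \<in> base_polytope M2"
  shows "(\<Sum>e\<in>ground. weight e * x e) = (1 - x 0) + real l * (1 - x (2 * k))"
proof -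
  have "(\<Sum>d<2 * k. weight d * x d) = (\<Sum>d<2 * k. if d = 1 then x d else 0)"
    by (intro sum.cong) (auto simp: weight_def)
  also have "\<dots> = 1 - x 0"
    using k_pos common_point_inner[OF assms, of 1] by simp
  finally have inner: "(\<Sum>d<2 * k. weight d * x d) = 1 - x 0" .
  have "(\<Sum>d<2 * l. weight (2 * k + d) * x (2 * k + d))
      = (\<Sum>d<2 * l. if even d then 0 else 1 - x (2 * k))"
    using k_pos by (intro sum.cong) (auto simp: weight_def common_point_outer[OF assms])
  also have "\<dots> = real l * (1 - x (2 * k))"
    by (simp add: sum_alternating)
  finally show ?thesis
    using inner by (simp add: sum_ground)
qed

lemma l1_distance_common_points:
  fixes x y :: "nat \<Rightarrow> real"
  assumes "x \<in> base_polytope M1" "x \<in> base_polytope M2"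
    and "y \<in> base_polytope M1" "y \<in> base_polytope M2"
  shows "(\<Sum>e\<in>ground. \<bar>x e - y e\<bar>) = 2 * k * \<bar>x 0 - y 0\<bar> + 2 * l * \<bar>x (2 * k) - y (2 * k)\<bar>"
proof -
  have "(\<Sum>d<2 * k. \<bar>x d - y d\<bar>) = (\<Sum>d<2 * k. \<bar>x 0 - y 0\<bar>)"
  proof (rule sum.cong[OF refl])
    fix d
    assume "d \<in> {..<2 * k}"
    then show "\<bar>x d - y d\<bar> = \<bar>x 0 - y 0\<bar>"
      using common_point_inner[OF assms(1,2), of d] common_point_inner[OF assms(3,4), of d]
      by (simp add: abs_minus_commute)
  qed
  moreover have "(\<Sum>d<2 * l. \<bar>x (2 * k + d) - y (2 * k + d)\<bar>)
      = (\<Sum>d<2 * l. \<bar>x (2 * k) - y (2 * k)\<bar>)"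
  proof (rule sum.cong[OF refl])
    fix d
    assume "d \<in> {..<2 * l}"
    then show "\<bar>x (2 * k + d) - y (2 * k + d)\<bar> = \<bar>x (2 * k) - y (2 * k)\<bar>"
      using common_point_outer[OF assms(1,2), of d] common_point_outer[OF assms(3,4), of d]
      by (simp add: abs_minus_commute)
  qed
  ultimately show ?thesis
    by (simp add: sum_ground)
qed

lemma chi_alternating_set:
  "chi (alternating_set s t) 0 = of_bool s" "chi (alternating_set s t) (2 * k) = of_bool t"
  using k_pos l_ge_2 by (auto simp: chi_def alternating_set_def ground_def)

lemma common_basis_eq_alternating_set:
  assumes "basis M1 B" "basis M2 B"
  shows "B = alternating_set (0 \<in> B) (2 * k \<in> B)"
proof -
  have "chi B 0 = chi (alternating_set (0 \<in> B) (2 * k \<in> B)) 0"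
    "chi B (2 * k) = chi (alternating_set (0 \<in> B) (2 * k \<in> B)) (2 * k)"
    by (simp_all only: chi_alternating_set) (simp_all add: chi_def)
  then have "chi B = chi (alternating_set (0 \<in> B) (2 * k \<in> B))"
    using assms basis_M1_alternating_set basis_M2_alternating_set
    by (intro common_point_eqI chi_in_base_polytope)
  then show ?thesis
    unfolding chi_def by (metis indicator_eq_1_iff set_eqI)
qed

lemma sum_weight_alternating_set:
  "sum weight (alternating_set s t) = (1 - of_bool s) + real l * (1 - of_bool t)"
proof -
  have "sum weight (alternating_set s t) = (\<Sum>e\<in>ground. weight e * chi (alternating_set s t) e)"
    unfolding chi_def by (simp add: ground_def alternating_set_def Int_absorb1 subset_iff)
  also have "\<dots> = (1 - of_bool s) + real l * (1 - of_bool t)"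
    using basis_M1_alternating_set basis_M2_alternating_set
    by (simp add: weight_common_point chi_in_base_polytope chi_alternating_set)
  finally show ?thesis .
qed

lemma weight_one_common_basis_iff:
  "basis M1 B \<and> basis M2 B \<and> sum weight B = 1 \<longleftrightarrow> B = alternating_set False True"
proof
  assume B: "basis M1 B \<and> basis M2 B \<and> sum weight B = 1"
  then have B_eq: "B = alternating_set (0 \<in> B) (2 * k \<in> B)"
    using common_basis_eq_alternating_set by blast
  then have "(1 - of_bool (0 \<in> B)) + real l * (1 - of_bool (2 * k \<in> B)) = (1::real)"
    using B sum_weight_alternating_set by metis
  moreover have "real l \<noteq> 0" "real l \<noteq> 1"
    using l_ge_2 by auto
  ultimately have "0 \<notin> B" "2 * k \<in> B"
    by (cases "0 \<in> B"; cases "2 * k \<in> B"; simp)+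
  with B_eq show "B = alternating_set False True"
    by simp
qed (simp add: basis_M1_alternating_set basis_M2_alternating_set sum_weight_alternating_set)

lemma xstar_common_point: "xstar \<in> base_polytope M1" "xstar \<in> base_polytope M2"
  using l_ge_2 unfolding xstar_def base_polytope_def
  by (intro conv_hull_segment; auto simp: basis_M1_alternating_set basis_M2_alternating_set)+

lemma xstar_anchors: "xstar 0 = 1" "xstar 1 = 0" "xstar (2 * k) = 1 - 1 / l"
  using k_pos l_ge_2 by (auto simp: xstar_def chi_def alternating_set_def ground_def)

lemma weight_xstar: "(\<Sum>e\<in>ground. weight e * xstar e) = 1"
  using l_ge_2 by (simp add: weight_common_point xstar_common_point xstar_anchors)

lemma vertex_xstar:
  "vertex_of xstar {x. x \<in> base_polytope M1 \<inter> base_polytope M2 \<and> (\<Sum>e\<in>ground. weight e * x e) = 1}"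
proof (rule vertex_of_if_determined_by_zeros)
  fix y
  assume y: "y \<in> {x. x \<in> base_polytope M1 \<inter> base_polytope M2 \<and> (\<Sum>e\<in>ground. weight e * x e) = 1}"
    and zeros: "\<And>e. xstar e = 0 \<Longrightarrow> y e = 0"
  then have y1: "y \<in> base_polytope M1" and y2: "y \<in> base_polytope M2"
    by auto
  have "y 1 = 0"
    using zeros xstar_anchors(2) by blast
  then have y0: "y 0 = 1"
    using common_point_inner[OF y1 y2, of 1] k_pos by simp
  then have "y (2 * k) = 1 - 1 / l"
    using y l_ge_2 weight_common_point[OF y1 y2] by (simp add: field_simps)
  with y1 y2 y0 show "y = xstar"
    by (intro common_point_eqI) (simp_all add: xstar_common_point xstar_anchors)
qed (auto simp: xstar_common_point weight_xstar base_polytope_nonneg)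

lemma l1_distance_xstar:
  "(\<Sum>e\<in>ground. \<bar>xstar e - chi (alternating_set False True) e\<bar>) = 2 * k + 2"
  using l_ge_2
  by (simp add: l1_distance_common_points xstar_common_point xstar_anchors chi_alternating_set
      chi_in_base_polytope basis_M1_alternating_set basis_M2_alternating_set)

end

theorem theorem20:
  shows "infinite {n::nat. \<exists>(E::nat set) \<I> \<I>' (w::nat \<Rightarrow> real) (xs::nat \<Rightarrow> real).
     card E = n \<and> matroid E \<I> \<and> matroid E \<I>' \<and> (\<forall>e\<in>E. w e = 0 \<or> w e = 1) \<and>
     vertex_of xs {x. x \<in> base_polytope \<I> \<inter> base_polytope \<I>' \<and> (\<Sum>e\<in>E. w e * x e) = 1} \<and>
     (\<exists>B. basis \<I> B \<and> basis \<I>' B \<and> sum w B = 1 \<and>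
          (\<forall>B'. basis \<I> B' \<and> basis \<I>' B' \<and> sum w B' = 1 \<longrightarrow> B' = B) \<and>
          (\<Sum>e\<in>E. \<bar>xs e - chi B e\<bar>) = 3 / 4 * real n)}"
  (is "infinite ?S")
proof -
  have "8 * m + 8 \<in> ?S" for m
  proof -
    interpret two_cycles "3 * m + 2" "m + 2"
      by unfold_locales auto
    have card: "card ground = 8 * m + 8"
      unfolding ground_def by simp
    have distance:
      "(\<Sum>e\<in>ground. \<bar>xstar e - chi (alternating_set False True) e\<bar>) = 3 / 4 * real (8 * m + 8)"
      unfolding l1_distance_xstar by simp
    have weight_01: "\<forall>e\<in>ground. weight e = 0 \<or> weight e = 1"
      unfolding weight_def by simp
    show ?thesis
      by (rule CollectI, rule exI[of _ ground], rule exI[of _ M1], rule exI[of _ M2],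
          rule exI[of _ weight], rule exI[of _ xstar], intro conjI exI[of _ "alternating_set False True"])
        (use card distance weight_01 matroid_M1 matroid_M2 vertex_xstar weight_one_common_basis_iff
          in auto)
  qed
  then have "range (\<lambda>m. 8 * m + 8) \<subseteq> ?S"
    by blast
  moreover have "infinite (range (\<lambda>m::nat. 8 * m + 8))"
    by (rule range_inj_infinite) (simp add: inj_on_def)
  ultimately show ?thesis
    using infinite_super by blast
qed

end
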